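(* Let $Y\subset\mathbb C^n$ be a $k$-dimensional subspace with basis $b^i=(b^i_1,\dots,b^i_n)$, $i=1,\dots,k$, and $a\in(\mathbb C^\times)^n$; assume that for every $j$, $Y\not\subset\{q_j=0\}$ and $Y^\perp\not\subset\{p_j=0\}$. For a $k$-element subset $I$ such that $q_I$ is a coordinate system on $Y$, let $\mathrm{Jac}_I(q_I,p_{\bar I})$ be the Jacobian of the projection $\pi_{L_{Y,a}}:L_{Y,a}\to\mathbb C^n$ with respect to the ordered coordinates $(q_I,p_{\bar I})$ on $L_{Y,a}$ and $(q_1,\dots,q_n)$ on $\mathbb C^n$. Then the function $d_I^2\,\mathrm{Jac}_I$ on $L_{Y,a}$ does not depend on the choice of such $I$, and $$d_I^2\,\mathrm{Jac}_I=(-1)^{n-k}\sum_{M\subset\{1,\dots,n\},\,|M|=n-k}d_{\bar M}^2\prod_{j\in M}\frac{a_j}{p_j^2}.$$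
   Context: $\mathbb C^n$ has coordinates $q_1,\dots,q_n$, $(\mathbb C^n)^*$ has dual coordinates $p_1,\dots,p_n$; $Y^\perp$ is the annihilator of $Y$. $r_a(q,p)=(q_1+a_1/p_1,\dots,q_n+a_n/p_n,p)$ (defined where all $p_j\ne0$) and $L_{Y,a}=r_a(Y\times Y^\perp)$, the variety in $\mathbb C^n\times\{\prod p_j\ne0\}$ given by $\sum_j\alpha_jp_j=0$ ($\alpha\in Y$), $\sum_j\beta_j(q_j-a_j/p_j)=0$ ($\beta\in Y^\perp$); $\pi_{L_{Y,a}}$ is the restriction of the projection $\mathbb C^n\times(\mathbb C^n)^*\to\mathbb C^n$. For a $k$-subset $I$, $\bar I$ is its complement; when $q_I$ are coordinates on $Y$, $(q_I,p_{\bar I})$ are coordinates on $L_{Y,a}$, ordered by increasing index. For a $k$-subset $I=\{i_1<\dots<i_k\}$, $d_I=\det_{i,l=1}^k(b^i_{i_l})$. *)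

theory Defs
  imports "HOL-Analysis.Analysis"
begin

text \<open>Conventions: C^n is represented by functions nat => complex vanishing
outside the index range {0..<n} (paper index j corresponds to j-1 here).\<close>

definition cvec :: "nat \<Rightarrow> (nat \<Rightarrow> complex) set" where
  "cvec n = {v. \<forall>j\<ge>n. v j = 0}"

definition detn :: "nat \<Rightarrow> (nat \<Rightarrow> nat \<Rightarrow> complex) \<Rightarrow> complex" where
  "detn m A = (\<Sum>\<sigma> | \<sigma> permutes {..<m}. of_int (sign \<sigma>) * (\<Prod>i<m. A i (\<sigma> i)))"

definition Ysp :: "nat \<Rightarrow> nat \<Rightarrow> (nat \<Rightarrow> nat \<Rightarrow> complex) \<Rightarrow> (nat \<Rightarrow> complex) set" where
  "Ysp n k b = {y. \<exists>c. y = (\<lambda>j. \<Sum>i<k. c i * b i j)}"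

definition lin_indep :: "nat \<Rightarrow> (nat \<Rightarrow> nat \<Rightarrow> complex) \<Rightarrow> bool" where
  "lin_indep k b \<longleftrightarrow> (\<forall>c. (\<forall>j. (\<Sum>i<k. c i * b i j) = 0) \<longrightarrow> (\<forall>i<k. c i = 0))"

definition annih :: "nat \<Rightarrow> (nat \<Rightarrow> complex) set \<Rightarrow> (nat \<Rightarrow> complex) set" where
  "annih n Y = {p \<in> cvec n. \<forall>y\<in>Y. (\<Sum>j<n. p j * y j) = 0}"

definition r_map :: "(nat \<Rightarrow> complex) \<Rightarrow> (nat \<Rightarrow> complex) \<times> (nat \<Rightarrow> complex)
    \<Rightarrow> (nat \<Rightarrow> complex) \<times> (nat \<Rightarrow> complex)" where
  "r_map a z = ((\<lambda>j. fst z j + a j / snd z j), snd z)"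

definition Lset :: "nat \<Rightarrow> (nat \<Rightarrow> complex) set \<Rightarrow> (nat \<Rightarrow> complex)
    \<Rightarrow> ((nat \<Rightarrow> complex) \<times> (nat \<Rightarrow> complex)) set" where
  "Lset n Y a = r_map a ` {(y, p). y \<in> Y \<and> p \<in> annih n Y \<and> (\<forall>j<n. p j \<noteq> 0)}"

definition coord_sys :: "nat set \<Rightarrow> (nat \<Rightarrow> complex) set \<Rightarrow> bool" where
  "coord_sys I Y \<longleftrightarrow> bij_betw (\<lambda>y j. if j \<in> I then y j else 0) Y {v. \<forall>j. j \<notin> I \<longrightarrow> v j = 0}"

text \<open>The coordinates (q_I, p_{bar I}) on L, ordered by increasing index:
the j-th coordinate is q_j if j is in I and p_j otherwise.\<close>
definition chart :: "nat set \<Rightarrow> (nat \<Rightarrow> complex) \<times> (nat \<Rightarrow> complex) \<Rightarrow> (nat \<Rightarrow> complex)" where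
  "chart I z = (\<lambda>j. if j \<in> I then fst z j else snd z j)"

definition Jac :: "nat \<Rightarrow> (nat \<Rightarrow> complex) set \<Rightarrow> (nat \<Rightarrow> complex) \<Rightarrow> nat set
    \<Rightarrow> (nat \<Rightarrow> complex) \<times> (nat \<Rightarrow> complex) \<Rightarrow> complex" where
  "Jac n Y a I z =
     (let x = chart I z; inv_ch = inv_into (Lset n Y a) (chart I)
      in detn n (\<lambda>i j. deriv (\<lambda>t. fst (inv_ch (x(j := t))) i) (x j)))"

definition dI :: "nat \<Rightarrow> (nat \<Rightarrow> nat \<Rightarrow> complex) \<Rightarrow> nat set \<Rightarrow> complex" where
  "dI k b I = detn k (\<lambda>i l. b i (sorted_list_of_set I ! l))"

end

theory Submission
  imports Defs "Jordan_Normal_Form.Determinant"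
begin

text \<open>Write Y as the row space of a matrix E that is the identity on the columns I. In the
chart x = (q_I, p_J) on L, J the complement of I, the point of L is explicit: p_J = x_J,
p_I = -E_{I,J} p_J and q = sum_{l in I} (x_l - a_l/p_l) E_l + a/p. Hence the Jacobian matrix has
unit rows on I, and its J x J block is -(P^T W P) with W = diag(a_l/p_l^2) and P the n x J
matrix whose columns span Y^perp. Cauchy-Binet expands det (P^T W P) as
sum_S prod_{j in S} w_j (det P_{S,J})^2. Finally d_I det P_{S,J} = +- d_{complement of S}:
Cauchy-Binet gives d_T = d_I det E_{I,T}, and deleting unit rows reduces det E_{I,T} and
det P_{S,J} to the same minor of E up to sign.\<close>

lemma detn_cong:
  assumes "\<And>i j. i < m \<Longrightarrow> j < m \<Longrightarrow> A i j = B i j"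
  shows "detn m A = detn m B"
  unfolding detn_def
  by (intro sum.cong refl arg_cong2[where f = "(*)"] prod.cong)
     (use assms permutes_in_image in fastforce)+

lemma detn_eq_det: "detn m A = Determinant.det (mat m m (\<lambda>(i, j). A i j))"
  unfolding detn_def Determinant.det_def
  by (auto simp: atLeast0LessThan permutes_in_image intro!: sum.cong prod.cong)

lemma detn_transpose: "detn m (\<lambda>i j. A j i) = detn m A"
proof -
  have "mat m m (\<lambda>(i, j). A j i) = transpose_mat (mat m m (\<lambda>(i, j). A i j))"
    by (rule eq_matI) auto
  thus ?thesis unfolding detn_eq_det by (simp add: det_transpose[of _ m])
qed

lemma detn_identical_rows:
  assumes "i < m" "j < m" "i \<noteq> j" "\<And>l. l < m \<Longrightarrow> A i l = A j l"
  shows "detn m A = 0"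
  unfolding detn_eq_det
  by (rule det_identical_rows[of _ m i j]) (use assms in \<open>auto intro!: eq_vecI\<close>)

lemma detn_permute_rows:
  assumes "\<tau> permutes {..<m}"
  shows "detn m (\<lambda>i j. A (\<tau> i) j) = of_int (sign \<tau>) * detn m A"
proof -
  have "mat m m (\<lambda>(i, j). A (\<tau> i) j) = mat m m (\<lambda>(i, j). mat m m (\<lambda>(i, j). A i j) $$ (\<tau> i, j))"
    using permutes_in_image[OF assms] by (intro eq_matI) auto
  thus ?thesis
    unfolding detn_eq_det
    using det_permute_rows[of "mat m m (\<lambda>(i, j). A i j)" m \<tau>] assms
    by (simp add: atLeast0LessThan)
qed

lemma detn_mult_cols: "detn m (\<lambda>i j. A i j * c j) = (\<Prod>j<m. c j) * detn m A"
  unfolding detn_def sum_distrib_left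
proof (rule sum.cong[OF refl])
  fix \<sigma> assume "\<sigma> \<in> {\<sigma>. \<sigma> permutes {..<m}}"
  hence "(\<Prod>i<m. c (\<sigma> i)) = (\<Prod>j<m. c j)"
    using prod.permute[of \<sigma> "{..<m}" c] by (simp add: comp_def)
  thus "of_int (sign \<sigma>) * (\<Prod>i<m. A i (\<sigma> i) * c (\<sigma> i)) =
      (\<Prod>j<m. c j) * (of_int (sign \<sigma>) * (\<Prod>i<m. A i (\<sigma> i)))"
    by (simp add: prod.distrib)
qed

lemma detn_uminus: "detn m (\<lambda>i j. - A i j) = (-1) ^ m * detn m A"
  using detn_mult_cols[of m A "\<lambda>_. -1"] by simp

lemma detn_unit_row:
  assumes "i0 < m" "j0 < m" "\<And>j. j < m \<Longrightarrow> A i0 j = (if j = j0 then 1 else 0)"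
  shows "detn m A = (-1) ^ (i0 + j0) *
    detn (m - 1) (\<lambda>i j. A (insert_index i0 i) (insert_index j0 j))"
proof -
  let ?A = "mat m m (\<lambda>(i, j). A i j)"
  have minor: "mat_delete ?A i0 j0 =
      mat (m - 1) (m - 1) (\<lambda>(i, j). A (insert_index i0 i) (insert_index j0 j))"
    unfolding mat_delete_def insert_index_def using assms(1,2) by (intro eq_matI) auto
  have "Determinant.det ?A = (\<Sum>j<m. ?A $$ (i0, j) * cofactor ?A i0 j)"
    by (rule laplace_expansion_row[OF _ assms(1)]) simp
  also have "\<dots> = (\<Sum>j<m. if j = j0 then cofactor ?A i0 j0 else 0)"
    by (rule sum.cong) (use assms in auto)
  also have "\<dots> = cofactor ?A i0 j0" using assms(2) by simp
  finally show ?thesis unfolding detn_eq_det cofactor_def minor by simp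
qed

lemma detn_sum_prod_expand:
  assumes "finite U"
  shows "detn m (\<lambda>i j. \<Sum>l\<in>U. X i l * Y l j) =
    (\<Sum>f\<in>PiE {..<m} (\<lambda>_. U). (\<Prod>i<m. X i (f i)) * detn m (\<lambda>i j. Y (f i) j))"
proof -
  have "detn m (\<lambda>i j. \<Sum>l\<in>U. X i l * Y l j) =
    (\<Sum>\<sigma> | \<sigma> permutes {..<m}. \<Sum>f\<in>PiE {..<m} (\<lambda>_. U).
       of_int (sign \<sigma>) * ((\<Prod>i<m. X i (f i)) * (\<Prod>i<m. Y (f i) (\<sigma> i))))"
    unfolding detn_def
    by (intro sum.cong refl) (simp add: prod_sum_PiE assms sum_distrib_left prod.distrib)
  also have "\<dots> = (\<Sum>f\<in>PiE {..<m} (\<lambda>_. U). \<Sum>\<sigma> | \<sigma> permutes {..<m}.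
       of_int (sign \<sigma>) * ((\<Prod>i<m. X i (f i)) * (\<Prod>i<m. Y (f i) (\<sigma> i))))"
    by (rule sum.swap)
  also have "\<dots> = (\<Sum>f\<in>PiE {..<m} (\<lambda>_. U). (\<Prod>i<m. X i (f i)) * detn m (\<lambda>i j. Y (f i) j))"
    unfolding detn_def by (simp add: sum_distrib_left mult_ac)
  finally show ?thesis .
qed

section \<open>Minors indexed by sets of indices\<close>

definition sorted_nth :: "nat set \<Rightarrow> nat \<Rightarrow> nat" where
  "sorted_nth R i = sorted_list_of_set R ! i"

definition minor :: "nat set \<Rightarrow> nat set \<Rightarrow> (nat \<Rightarrow> nat \<Rightarrow> complex) \<Rightarrow> complex" where
  "minor R T A = detn (card R) (\<lambda>i j. A (sorted_nth R i) (sorted_nth T j))"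

lemma bij_betw_sorted_nth: "finite R \<Longrightarrow> bij_betw (sorted_nth R) {..<card R} R"
  unfolding sorted_nth_def[abs_def] by (rule bij_betw_nth) auto

lemma sorted_nth_in: "finite R \<Longrightarrow> i < card R \<Longrightarrow> sorted_nth R i \<in> R"
  using bij_betwE[OF bij_betw_sorted_nth] by blast

lemma sorted_nth_inject:
  "finite R \<Longrightarrow> i < card R \<Longrightarrow> j < card R \<Longrightarrow> sorted_nth R i = sorted_nth R j \<longleftrightarrow> i = j"
  using bij_betw_imp_inj_on[OF bij_betw_sorted_nth] by (auto dest: inj_onD)

lemma sorted_nth_image: "finite R \<Longrightarrow> sorted_nth R ` {..<card R} = R"
  using bij_betw_imp_surj_on[OF bij_betw_sorted_nth] .

lemma sorted_nth_strict_mono: "i < j \<Longrightarrow> j < card R \<Longrightarrow> sorted_nth R i < sorted_nth R j"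
  using strict_sorted_list_of_set[of R]
  unfolding sorted_nth_def sorted_wrt_iff_nth_less by (metis length_sorted_list_of_set)

lemma sorted_nth_lessThan: "i < m \<Longrightarrow> sorted_nth {..<m} i = i"
  unfolding sorted_nth_def by (simp add: lessThan_atLeast0)

lemma sorted_nth_Diff_singleton:
  assumes R: "finite R" and p: "p < card R" and i: "i < card R - 1"
  shows "sorted_nth (R - {sorted_nth R p}) i = sorted_nth R (insert_index p i)"
proof -
  let ?l = "map (\<lambda>i. sorted_nth R (insert_index p i)) [0..<card R - 1]"
  have "insert_index p ` {..<card R - 1} = {..<card R} - {p}"
    using insert_index_image[of p "card R - 1"] p by (simp add: atLeast0LessThan)
  moreover have "set ?l = sorted_nth R ` insert_index p ` {..<card R - 1}"
    by (simp add: image_image atLeast0LessThan)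
  ultimately have "set ?l = sorted_nth R ` ({..<card R} - {p})"
    by simp
  also have "\<dots> = R - {sorted_nth R p}"
    using bij_betw_sorted_nth[OF R] p
    by (subst inj_on_image_set_diff) (auto simp: bij_betw_def)
  finally have "set ?l = R - {sorted_nth R p}" .
  moreover have "sorted_wrt (<) ?l"
    unfolding sorted_wrt_iff_nth_less
    by (auto intro!: sorted_nth_strict_mono simp: insert_index_def)
  moreover have "length ?l = card (R - {sorted_nth R p})"
    using sorted_nth_in[OF R p] R by simp
  ultimately have "sorted_list_of_set (R - {sorted_nth R p}) = ?l"
    using sorted_list_of_set_unique[of "R - {sorted_nth R p}" ?l] R by blast
  thus ?thesis unfolding sorted_nth_def[of "R - _"] using i by simp
qed

lemma minor_cong:
  assumes "finite R" "finite T" "card R = card T"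
    and "\<And>r t. r \<in> R \<Longrightarrow> t \<in> T \<Longrightarrow> A r t = B r t"
  shows "minor R T A = minor R T B"
  unfolding minor_def by (rule detn_cong) (use assms sorted_nth_in in simp)

lemma minor_lessThan: "minor {..<m} {..<m} A = detn m A"
  unfolding minor_def card_lessThan by (rule detn_cong) (simp add: sorted_nth_lessThan)

lemma minor_transpose: "card R = card T \<Longrightarrow> minor T R (\<lambda>t r. A r t) = minor R T A"
  unfolding minor_def using detn_transpose[of "card R" "\<lambda>i j. A (sorted_nth R i) (sorted_nth T j)"]
  by simp

lemma minor_mult_cols:
  assumes "finite T" "card R = card T"
  shows "minor R T (\<lambda>r t. A r t * c t) = (\<Prod>t\<in>T. c t) * minor R T A"
proof -
  have "(\<Prod>j<card R. c (sorted_nth T j)) = (\<Prod>t\<in>T. c t)"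
    using prod.reindex_bij_betw[OF bij_betw_sorted_nth[OF assms(1)], of c] assms(2) by simp
  thus ?thesis unfolding minor_def by (simp add: detn_mult_cols)
qed

lemma minor_uminus: "minor R T (\<lambda>r t. - A r t) = (-1) ^ card R * minor R T A"
  unfolding minor_def by (rule detn_uminus)

lemma minor_delete_unit_row:
  assumes R: "finite R" and T: "finite T" and card: "card R = card T"
    and p: "p < card R" "sorted_nth R p = r" and q: "q < card T" "sorted_nth T q = r"
    and unit: "\<And>t. t \<in> T \<Longrightarrow> A r t = (if t = r then 1 else 0)"
  shows "minor R T A = (-1) ^ (p + q) * minor (R - {r}) (T - {r}) A"
proof -
  have "minor R T A = (-1) ^ (p + q) * detn (card R - 1)
      (\<lambda>i j. A (sorted_nth R (insert_index p i)) (sorted_nth T (insert_index q j)))"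
    unfolding minor_def
  proof (rule detn_unit_row)
    fix j assume "j < card R"
    thus "A (sorted_nth R p) (sorted_nth T j) = (if j = q then 1 else 0)"
      using unit[of "sorted_nth T j"] sorted_nth_in[OF T] sorted_nth_inject[OF T _ q(1)] p q card
      by auto
  qed (use p q card in auto)
  also have "\<dots> = (-1) ^ (p + q) * minor (R - {r}) (T - {r}) A"
  proof -
    have "card (R - {r}) = card R - 1" using sorted_nth_in[OF R p(1)] R p by simp
    moreover have "sorted_nth (R - {r}) i = sorted_nth R (insert_index p i)"
      if "i < card R - 1" for i
      using sorted_nth_Diff_singleton[OF R p(1) that] p(2) by simp
    moreover have "sorted_nth (T - {r}) j = sorted_nth T (insert_index q j)"
      if "j < card T - 1" for j
      using sorted_nth_Diff_singleton[OF T q(1) that] q(2) by simp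
    ultimately show ?thesis
      unfolding minor_def using card by (auto intro!: detn_cong)
  qed
  finally show ?thesis .
qed

lemma minor_delete_unit_rows:
  assumes R: "finite R" and T: "finite T" and card: "card R = card T"
    and V: "V \<subseteq> R" "V \<subseteq> T"
    and unit: "\<And>v t. v \<in> V \<Longrightarrow> t \<in> T \<Longrightarrow> A v t = (if t = v then 1 else 0)"
  shows "\<exists>N. minor R T A = (-1) ^ N * minor (R - V) (T - V) A \<and> (R = T \<longrightarrow> even N)"
proof -
  have "finite V" using V(1) R by (rule finite_subset)
  thus ?thesis using V unit
  proof (induction V rule: finite_induct)
    case (insert v V)
    then obtain N where N: "minor R T A = (-1) ^ N * minor (R - V) (T - V) A"
      and even: "R = T \<longrightarrow> even N" by auto
    have fin: "finite (R - V)" "finite (T - V)" using R T by auto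
    have card': "card (R - V) = card (T - V)"
      using insert R T card by (simp add: card_Diff_subset finite_subset)
    have "v \<in> sorted_nth (R - V) ` {..<card (R - V)}"
      using sorted_nth_image[OF fin(1)] insert by auto
    then obtain p where p: "p < card (R - V)" "sorted_nth (R - V) p = v" by auto
    have "v \<in> sorted_nth (T - V) ` {..<card (T - V)}"
      using sorted_nth_image[OF fin(2)] insert by auto
    then obtain q where q: "q < card (T - V)" "sorted_nth (T - V) q = v" by auto
    have "minor (R - V) (T - V) A = (-1) ^ (p + q) * minor (R - insert v V) (T - insert v V) A"
    proof -
      have "R - insert v V = R - V - {v}" "T - insert v V = T - V - {v}" by auto
      thus ?thesis
        by (simp only:) (rule minor_delete_unit_row[OF fin card' p q], use insert.prems in auto)
    qed
    \<comment> \<open>on the diagonal a deleted index has the same row and column position\<close>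
    moreover have "R = T \<longrightarrow> p = q"
      using p q sorted_nth_inject[OF fin(1)] by auto
    ultimately show ?case using N even
      by (intro exI[of _ "N + (p + q)"]) (simp add: power_add)
  qed (intro exI[of _ 0], simp)
qed

lemma minor_delete_unit_rows_square:
  assumes "finite R" "finite T" "card R = card T" "V \<subseteq> R" "V \<subseteq> T"
    and "\<And>v t. v \<in> V \<Longrightarrow> t \<in> T \<Longrightarrow> A v t = (if t = v then 1 else 0)"
  shows "(minor R T A)\<^sup>2 = (minor (R - V) (T - V) A)\<^sup>2"
proof -
  obtain N where "minor R T A = (-1) ^ N * minor (R - V) (T - V) A"
    using minor_delete_unit_rows[OF assms] by blast
  moreover have "((-1::complex) ^ N)\<^sup>2 = 1"
    by (simp add: power_mult_distrib flip: power_mult)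
  ultimately show ?thesis by (simp add: power_mult_distrib)
qed

lemma minor_delete_unit_rows_diag:
  assumes "finite R" "V \<subseteq> R"
    and "\<And>v t. v \<in> V \<Longrightarrow> t \<in> R \<Longrightarrow> A v t = (if t = v then 1 else 0)"
  shows "minor R R A = minor (R - V) (R - V) A"
  using minor_delete_unit_rows[of R R V A] assms by auto

section \<open>The Cauchy-Binet formula\<close>

lemma inj_on_sorted_nth_permute:
  "inj_on (\<lambda>(S, \<tau>). restrict (\<lambda>i. sorted_nth S (\<tau> i)) {..<m})
     (SIGMA S:{S. finite S \<and> card S = m}. {\<tau>. \<tau> permutes {..<m}})" (is "inj_on ?g ?D")
proof (rule inj_onI)
  fix x y assume xy: "x \<in> ?D" "y \<in> ?D" "?g x = ?g y"
  obtain S \<tau> S' \<tau>' where x: "x = (S, \<tau>)" and y: "y = (S', \<tau>')" by fastforce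
  have S: "finite S" "card S = m" "finite S'" "card S' = m"
    and \<tau>: "\<tau> permutes {..<m}" "\<tau>' permutes {..<m}"
    using xy(1,2) unfolding x y by auto
  have eq: "restrict (\<lambda>i. sorted_nth S (\<tau> i)) {..<m} = restrict (\<lambda>i. sorted_nth S' (\<tau>' i)) {..<m}"
    using xy(3) unfolding x y by simp
  have image: "restrict (\<lambda>i. sorted_nth T (\<rho> i)) {..<m} ` {..<m} = T"
    if "finite T" "card T = m" "\<rho> permutes {..<m}" for T \<rho>
  proof -
    have "restrict (\<lambda>i. sorted_nth T (\<rho> i)) {..<m} ` {..<m} = sorted_nth T ` \<rho> ` {..<m}"
      by (simp only: image_restrict_eq image_image)
    thus ?thesis using sorted_nth_image[OF that(1)] permutes_image[OF that(3)] that(2) by simp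
  qed
  have "S = S'"
    using image[OF S(1,2) \<tau>(1)] image[OF S(3,4) \<tau>(2)] eq by simp
  moreover have "\<tau> i = \<tau>' i" for i
  proof (cases "i < m")
    case True
    hence "sorted_nth S (\<tau> i) = sorted_nth S (\<tau>' i)"
      using fun_cong[OF eq, of i] \<open>S = S'\<close> by simp
    thus ?thesis
      using sorted_nth_inject[OF S(1)] permutes_in_image[OF \<tau>(1)] permutes_in_image[OF \<tau>(2)]
        True S(2) by auto
  qed (use permutes_not_in[OF \<tau>(1)] permutes_not_in[OF \<tau>(2)] in simp)
  ultimately show "x = y" unfolding x y by auto
qed

lemma image_sorted_nth_permute:
  assumes U: "finite U"
  shows "(\<lambda>(S, \<tau>). restrict (\<lambda>i. sorted_nth S (\<tau> i)) {..<m})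
      ` (SIGMA S:{S. S \<subseteq> U \<and> card S = m}. {\<tau>. \<tau> permutes {..<m}})
    = {f \<in> PiE {..<m} (\<lambda>_. U). inj_on f {..<m}}" (is "?g ` ?D = ?F")
proof
  show "?g ` ?D \<subseteq> ?F"
  proof
    fix f assume "f \<in> ?g ` ?D"
    then obtain S \<tau> where S: "S \<subseteq> U" "card S = m" and \<tau>: "\<tau> permutes {..<m}"
      and f: "f = restrict (\<lambda>i. sorted_nth S (\<tau> i)) {..<m}" by auto
    have fin: "finite S" using S(1) U by (rule finite_subset)
    have "inj_on (sorted_nth S) (\<tau> ` {..<m})"
      using bij_betw_imp_inj_on[OF bij_betw_sorted_nth[OF fin]] permutes_image[OF \<tau>] S(2)
      by simp
    hence "inj_on (\<lambda>i. sorted_nth S (\<tau> i)) {..<m}"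
      using comp_inj_on[OF permutes_inj_on[OF \<tau>]] by (simp add: comp_def)
    moreover have "sorted_nth S (\<tau> i) \<in> U" if "i < m" for i
      using sorted_nth_in[OF fin] permutes_in_image[OF \<tau>] that S by auto
    ultimately show "f \<in> ?F" unfolding f by (auto simp: inj_on_def)
  qed
next
  show "?F \<subseteq> ?g ` ?D"
  proof
    fix f assume "f \<in> ?F"
    hence f: "f \<in> PiE {..<m} (\<lambda>_. U)" and inj: "inj_on f {..<m}" by auto
    define S where "S = f ` {..<m}"
    have fin: "finite S" and card: "card S = m" and SU: "S \<subseteq> U"
      using card_image[OF inj] f by (auto simp: S_def)
    define \<tau> where "\<tau> i = (if i < m then inv_into {..<m} (sorted_nth S) (f i) else i)" for i
    have "bij_betw (inv_into {..<m} (sorted_nth S) \<circ> f) {..<m} {..<m}"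
      using bij_betw_trans[of f "{..<m}" S] bij_betw_inv_into[OF bij_betw_sorted_nth[OF fin]]
        inj card by (auto simp: S_def bij_betw_def)
    hence "bij_betw \<tau> {..<m} {..<m}"
      by (rule bij_betw_cong[THEN iffD1, rotated]) (simp add: \<tau>_def)
    hence \<tau>: "\<tau> permutes {..<m}"
      by (rule bij_imp_permutes) (simp add: \<tau>_def)
    have "restrict (\<lambda>i. sorted_nth S (\<tau> i)) {..<m} = f"
    proof
      fix i show "restrict (\<lambda>i. sorted_nth S (\<tau> i)) {..<m} i = f i"
        using f_inv_into_f[of "f i" "sorted_nth S" "{..<m}"] sorted_nth_image[OF fin] card
          PiE_arb[OF f, of i]
        by (auto simp: \<tau>_def S_def)
    qed
    thus "f \<in> ?g ` ?D" using SU card \<tau> by (intro image_eqI[of _ _ "(S, \<tau>)"]) auto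
  qed
qed

lemma detn_Cauchy_Binet:
  assumes U: "finite U"
  shows "detn m (\<lambda>i j. \<Sum>l\<in>U. X i l * Y l j) =
    (\<Sum>S | S \<subseteq> U \<and> card S = m.
       detn m (\<lambda>i j. X i (sorted_nth S j)) * detn m (\<lambda>i j. Y (sorted_nth S i) j))"
proof -
  define h where "h f = (\<Prod>i<m. X i (f i)) * detn m (\<lambda>i j. Y (f i) j)" for f
  define g where "g = (\<lambda>(S, \<tau>). restrict (\<lambda>i. sorted_nth S (\<tau> i)) {..<m})"
  define D where "D = (SIGMA S:{S. S \<subseteq> U \<and> card S = m}. {\<tau>. \<tau> permutes {..<m}})"
  define F where "F = {f \<in> PiE {..<m} (\<lambda>_. U). inj_on f {..<m}}"
  have inj: "inj_on g D"
  proof -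
    have "D \<subseteq> (SIGMA S:{S. finite S \<and> card S = m}. {\<tau>. \<tau> permutes {..<m}})"
      unfolding D_def using finite_subset[OF _ U] by auto
    thus ?thesis unfolding g_def by (rule inj_on_subset[OF inj_on_sorted_nth_permute])
  qed
  have h_noninj: "h f = 0" if noninj: "\<not> inj_on f {..<m}" for f
  proof -
    obtain i j where ij: "i < m" "j < m" "i \<noteq> j" "f i = f j"
      using noninj by (auto simp: inj_on_def)
    have "detn m (\<lambda>i j. Y (f i) j) = 0"
      by (rule detn_identical_rows[OF ij(1-3)]) (simp add: ij(4))
    thus ?thesis unfolding h_def by simp
  qed
  have h_g: "h (g (S, \<tau>)) =
      of_int (sign \<tau>) * (\<Prod>i<m. X i (sorted_nth S (\<tau> i))) * detn m (\<lambda>i j. Y (sorted_nth S i) j)"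
    if "\<tau> permutes {..<m}" for S \<tau>
  proof -
    have "detn m (\<lambda>i j. Y (g (S, \<tau>) i) j) = detn m (\<lambda>i j. Y (sorted_nth S (\<tau> i)) j)"
      by (rule detn_cong) (simp add: g_def)
    moreover have "(\<Prod>i<m. X i (g (S, \<tau>) i)) = (\<Prod>i<m. X i (sorted_nth S (\<tau> i)))"
      by (rule prod.cong) (simp_all add: g_def)
    moreover have "detn m (\<lambda>i j. Y (sorted_nth S (\<tau> i)) j) =
        of_int (sign \<tau>) * detn m (\<lambda>i j. Y (sorted_nth S i) j)"
      by (rule detn_permute_rows[OF that])
    ultimately show ?thesis unfolding h_def by (simp add: mult_ac)
  qed
  have det_X: "(\<Sum>\<tau> | \<tau> permutes {..<m}. of_int (sign \<tau>) * (\<Prod>i<m. X i (sorted_nth S (\<tau> i)))) =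
      detn m (\<lambda>i j. X i (sorted_nth S j))" for S
    by (simp add: detn_def)
  have "detn m (\<lambda>i j. \<Sum>l\<in>U. X i l * Y l j) = (\<Sum>f\<in>PiE {..<m} (\<lambda>_. U). h f)"
    unfolding h_def by (rule detn_sum_prod_expand[OF U])
  also have "\<dots> = (\<Sum>f\<in>F. h f)"
    by (rule sum.mono_neutral_right) (auto simp: F_def U finite_PiE h_noninj)
  also have "\<dots> = (\<Sum>p\<in>D. h (g p))"
    using sum.reindex[OF inj, of h] image_sorted_nth_permute[OF U, of m]
    unfolding F_def g_def D_def by simp
  also have "\<dots> = (\<Sum>S | S \<subseteq> U \<and> card S = m. \<Sum>\<tau> | \<tau> permutes {..<m}. h (g (S, \<tau>)))"
    unfolding D_def by (simp add: sum.cartesian_product)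
  also have "\<dots> = (\<Sum>S | S \<subseteq> U \<and> card S = m.
      detn m (\<lambda>i j. X i (sorted_nth S j)) * detn m (\<lambda>i j. Y (sorted_nth S i) j))"
    by (intro sum.cong refl) (simp add: h_g det_X flip: sum_distrib_right)
  finally show ?thesis .
qed

lemma minor_Cauchy_Binet:
  assumes "finite U"
  shows "minor R T (\<lambda>r t. \<Sum>l\<in>U. X r l * Y l t) =
    (\<Sum>S | S \<subseteq> U \<and> card S = card R. minor R S X * minor S T Y)"
  unfolding minor_def
  unfolding detn_Cauchy_Binet[OF assms, of "card R" "\<lambda>i l. X (sorted_nth R i) l" "\<lambda>l j. Y l (sorted_nth T j)"]
  by (rule sum.cong) auto

lemma dI_eq_minor: "finite T \<Longrightarrow> dI k b T = minor {..<k} T b"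
  unfolding dI_def minor_def card_lessThan
  by (rule detn_cong) (simp add: sorted_nth_lessThan flip: sorted_nth_def)

text \<open>Y is the row space of E, which is the identity on the columns I; every Y on which
q_I are coordinates has this form (coord_sys_echelon below).\<close>

locale echelon =
  fixes n :: nat and I :: "nat set" and E :: "nat \<Rightarrow> nat \<Rightarrow> complex"
  assumes I_subset: "I \<subseteq> {..<n}"
    and E_unit: "\<And>l t. l \<in> I \<Longrightarrow> t \<in> I \<Longrightarrow> E l t = (if t = l then 1 else 0)"
begin

definition Y :: "(nat \<Rightarrow> complex) set" where
  "Y = {y. \<exists>c. y = (\<lambda>j. \<Sum>l\<in>I. c l * E l j)}"

abbreviation J :: "nat set" where
  "J \<equiv> {..<n} - I"

lemma finite_I: "finite I"
  using I_subset by (rule finite_subset) simp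

lemma sum_E_unit:
  assumes "t \<in> I"
  shows "(\<Sum>l\<in>I. f l * E l t) = f t"
proof -
  have "(\<Sum>l\<in>I. f l * E l t) = (\<Sum>l\<in>I. if l = t then f l else 0)"
    using assms by (intro sum.cong) (auto simp: E_unit)
  thus ?thesis using assms finite_I by simp
qed

lemma sum_E_row_unit:
  assumes "l \<in> I"
  shows "(\<Sum>t\<in>I. f t * E l t) = f l"
proof -
  have "(\<Sum>t\<in>I. f t * E l t) = (\<Sum>t\<in>I. if t = l then f t else 0)"
    using assms by (intro sum.cong) (auto simp: E_unit)
  thus ?thesis using assms finite_I by simp
qed

lemma lincomb_in_Y: "(\<lambda>j. \<Sum>l\<in>I. c l * E l j) \<in> Y"
  unfolding Y_def mem_Collect_eq by (rule exI[of _ c], rule refl)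

lemma E_in_Y:
  assumes "l \<in> I"
  shows "E l \<in> Y"
proof -
  have "E l = (\<lambda>j. \<Sum>l'\<in>I. (if l' = l then 1 else 0) * E l' j)"
    using assms finite_I by (simp add: if_distrib[of "\<lambda>c. c * _"] cong: if_cong)
  thus ?thesis by (simp only: lincomb_in_Y)
qed

lemma Y_expand: "y \<in> Y \<Longrightarrow> y = (\<lambda>j. \<Sum>l\<in>I. y l * E l j)"
  unfolding Y_def by (auto simp: sum_E_unit cong: sum.cong)

lemma annih_Y_iff:
  assumes "p \<in> cvec n"
  shows "p \<in> annih n Y \<longleftrightarrow> (\<forall>l\<in>I. p l = - (\<Sum>m\<in>J. E l m * p m))"
proof -
  have split: "(\<Sum>j<n. p j * E l j) = p l + (\<Sum>m\<in>J. E l m * p m)" if "l \<in> I" for l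
  proof -
    have "(\<Sum>j<n. p j * E l j) = (\<Sum>j\<in>J. p j * E l j) + (\<Sum>j\<in>I. p j * E l j)"
      using sum.subset_diff[OF I_subset] by simp
    thus ?thesis using sum_E_row_unit[OF that, of p] by (simp add: mult.commute)
  qed
  have "(\<Sum>j<n. p j * y j) = (\<Sum>l\<in>I. y l * (\<Sum>j<n. p j * E l j))" if "y \<in> Y" for y
    by (subst Y_expand[OF that]) (simp add: sum_distrib_left sum.swap[of _ I] mult_ac)
  hence "p \<in> annih n Y \<longleftrightarrow> (\<forall>l\<in>I. (\<Sum>j<n. p j * E l j) = 0)"
    using assms E_in_Y unfolding annih_def by (auto intro: sum.neutral)
  also have "\<dots> \<longleftrightarrow> (\<forall>l\<in>I. p l = - (\<Sum>m\<in>J. E l m * p m))"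
    by (simp add: split eq_neg_iff_add_eq_0)
  finally show ?thesis .
qed

text \<open>The inverse of the chart (q_I, p_J) on L: p_J is given, p_I is forced by p in Y^perp
(annih_Y_iff), and y in Y is determined by y_I = q_I - a_I / p_I.\<close>

definition chart_p :: "(nat \<Rightarrow> complex) \<Rightarrow> nat \<Rightarrow> complex" where
  "chart_p x l = (if l \<in> J then x l else if l \<in> I then - (\<Sum>m\<in>J. E l m * x m) else 0)"

definition chart_inv :: "(nat \<Rightarrow> complex) \<Rightarrow> (nat \<Rightarrow> complex)
    \<Rightarrow> (nat \<Rightarrow> complex) \<times> (nat \<Rightarrow> complex)" where
  "chart_inv a x = r_map a (\<lambda>j. \<Sum>l\<in>I. (x l - a l / chart_p x l) * E l j, chart_p x)"

lemma chart_p_in_annih: "chart_p x \<in> annih n Y"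
proof -
  have "chart_p x \<in> cvec n" unfolding cvec_def chart_p_def using I_subset by auto
  moreover have "(\<Sum>m\<in>J. E l m * x m) = (\<Sum>m\<in>J. E l m * chart_p x m)" for l
    by (intro sum.cong) (auto simp: chart_p_def)
  ultimately show ?thesis by (auto simp: annih_Y_iff chart_p_def)
qed

lemma Lset_elim:
  assumes "z \<in> Lset n Y a"
  obtains y p where "z = r_map a (y, p)" "y \<in> Y" "p \<in> annih n Y" "\<forall>j<n. p j \<noteq> 0"
  using assms unfolding Lset_def by auto

lemma chart_p_chart:
  assumes "z \<in> Lset n Y a"
  shows "chart_p (chart I z) = snd z"
proof
  fix l
  obtain y p where z: "z = r_map a (y, p)" and p: "p \<in> annih n Y"
    using assms by (rule Lset_elim)
  have p_cvec: "p \<in> cvec n" using p unfolding annih_def by simp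
  have "(\<Sum>m\<in>J. E l m * chart I z m) = (\<Sum>m\<in>J. E l m * p m)"
    by (intro sum.cong) (auto simp: chart_def z r_map_def)
  thus "chart_p (chart I z) l = snd z l"
    using p p_cvec annih_Y_iff[OF p_cvec]
    by (auto simp: chart_p_def chart_def z r_map_def cvec_def)
qed

lemma chart_inv_chart:
  assumes "z \<in> Lset n Y a"
  shows "chart_inv a (chart I z) = z"
proof -
  obtain y p where z: "z = r_map a (y, p)" and y: "y \<in> Y"
    using assms by (rule Lset_elim)
  have "(\<lambda>j. \<Sum>l\<in>I. (chart I z l - a l / p l) * E l j) = (\<lambda>j. \<Sum>l\<in>I. y l * E l j)"
    by (intro ext sum.cong) (auto simp: chart_def z r_map_def)
  thus ?thesis
    using chart_p_chart[OF assms] Y_expand[OF y]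
    unfolding chart_inv_def by (simp add: z r_map_def)
qed

lemma inj_on_chart: "inj_on (chart I) (Lset n Y a)"
  by (rule inj_on_inverseI[where g = "chart_inv a"]) (rule chart_inv_chart)

lemma chart_chart_inv:
  assumes "\<forall>j\<ge>n. x j = 0" and "\<forall>l<n. chart_p x l \<noteq> 0"
  shows "chart_inv a x \<in> Lset n Y a" and "chart I (chart_inv a x) = x"
proof -
  have "(\<lambda>j. \<Sum>l\<in>I. (x l - a l / chart_p x l) * E l j) \<in> Y" by (rule lincomb_in_Y)
  thus "chart_inv a x \<in> Lset n Y a"
    using chart_p_in_annih assms(2) unfolding chart_inv_def Lset_def by auto
  show "chart I (chart_inv a x) = x"
    using assms(1) I_subset
    by (auto simp: chart_def chart_inv_def r_map_def sum_E_unit chart_p_def)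
qed

lemma inv_into_chart:
  assumes "\<forall>j\<ge>n. x j = 0" and "\<forall>l<n. chart_p x l \<noteq> 0"
  shows "inv_into (Lset n Y a) (chart I) x = chart_inv a x"
  by (rule inv_into_f_eq[OF inj_on_chart chart_chart_inv[OF assms]])

end

section \<open>The Jacobian of the projection\<close>

lemma eventually_nhds_affine_nonzero:
  fixes c d u :: "'a::real_normed_field"
  assumes "c \<noteq> 0"
  shows "\<forall>\<^sub>F t in nhds u. c + (t - u) * d \<noteq> 0"
proof -
  have "((\<lambda>t. c + (t - u) * d) \<longlongrightarrow> c + (u - u) * d) (nhds u)"
    by (intro tendsto_intros filterlim_ident)
  thus ?thesis using tendsto_imp_eventually_ne assms by fastforce
qed

lemma fun_upd_eq_affine:
  fixes x :: "'a \<Rightarrow> 'b::comm_ring_1"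
  shows "(x(j := t)) m = x m + (t - x j) * (if m = j then 1 else 0)"
  by simp

context echelon
begin

lemma chart_p_upd:
  "chart_p (x(j := t)) l = chart_p x l + (t - x j) * chart_p (\<lambda>m. if m = j then 1 else 0) l"
proof -
  have "(\<Sum>m\<in>J. E l m * (x(j := t)) m) =
      (\<Sum>m\<in>J. E l m * x m) + (t - x j) * (\<Sum>m\<in>J. E l m * (if m = j then 1 else 0))"
    unfolding fun_upd_eq_affine by (simp add: distrib_left sum.distrib sum_distrib_left mult.left_commute)
  thus ?thesis by (auto simp: chart_p_def algebra_simps)
qed

text \<open>Entry (i, j) is the partial derivative of q_i in the chart coordinate x_j, where
w l = a l / (p l)^2.\<close>

definition jac_matrix :: "(nat \<Rightarrow> complex) \<Rightarrow> nat \<Rightarrow> nat \<Rightarrow> complex" where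
  "jac_matrix w i j =
    (if i \<in> I then (if j = i then 1 else 0)
     else if j \<in> I then E j i
     else - (\<Sum>l\<in>I. w l * E l i * E l j) - (if i = j then w i else 0))"

lemma chart_p_unit_vector:
  "chart_p (\<lambda>m. if m = j then 1 else 0) l =
    (if l \<in> J then (if l = j then 1 else 0) else if l \<in> I \<and> j \<in> J then - E l j else 0)"
proof -
  have "(\<Sum>m\<in>J. E l m * (if m = j then 1 else 0)) = (if j \<in> J then E l j else 0)"
    by (simp add: if_distrib[of "(*) _"] cong: if_cong)
  thus ?thesis by (auto simp: chart_p_def)
qed

lemma chart_inv_derivative_eq_jac_matrix:
  assumes "i < n" "j < n"
  defines "e \<equiv> chart_p (\<lambda>m. if m = j then 1 else 0)"
  shows "(\<Sum>l\<in>I. ((if l = j then 1 else 0) + a l * e l / (P l)\<^sup>2) * E l i) - a i * e i / (P i)\<^sup>2 =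
    jac_matrix (\<lambda>l. a l / (P l)\<^sup>2) i j"
proof (cases "i \<in> I")
  case True
  thus ?thesis by (simp add: sum_E_unit jac_matrix_def)
next
  case i: False
  show ?thesis
  proof (cases "j \<in> I")
    case True
    hence "(\<Sum>l\<in>I. ((if l = j then 1 else 0) + a l * e l / (P l)\<^sup>2) * E l i) =
        (\<Sum>l\<in>I. (if l = j then E l i else 0))"
      by (intro sum.cong) (auto simp: e_def chart_p_unit_vector)
    moreover have "i \<noteq> j" using True i by auto
    ultimately show ?thesis using True i finite_I by (simp add: e_def chart_p_unit_vector jac_matrix_def)
  next
    case False
    hence "(\<Sum>l\<in>I. ((if l = j then 1 else 0) + a l * e l / (P l)\<^sup>2) * E l i) =
        - (\<Sum>l\<in>I. a l / (P l)\<^sup>2 * E l i * E l j)"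
      using assms by (auto simp: e_def chart_p_unit_vector sum_negf[symmetric] intro!: sum.cong)
    thus ?thesis using False i assms by (simp add: e_def chart_p_unit_vector jac_matrix_def)
  qed
qed

lemma chart_inv_has_field_derivative:
  assumes nz: "\<forall>l<n. chart_p x l \<noteq> 0" and i: "i < n" and j: "j < n"
  shows "((\<lambda>t. fst (chart_inv a (x(j := t))) i) has_field_derivative
      jac_matrix (\<lambda>l. a l / (chart_p x l)\<^sup>2) i j) (at (x j))"
proof -
  define P where "P = chart_p x"
  define e where "e = chart_p (\<lambda>m. if m = j then 1 else 0)"
  have P: "P l \<noteq> 0" if "l \<in> I \<union> {i}" for l
    using nz that i I_subset unfolding P_def by auto
  have "(\<lambda>t. fst (chart_inv a (x(j := t))) i) = (\<lambda>t.
      (\<Sum>l\<in>I. (x l + (t - x j) * (if l = j then 1 else 0) - a l / (P l + (t - x j) * e l)) * E l i)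
      + a i / (P i + (t - x j) * e i))"
    unfolding P_def e_def chart_inv_def r_map_def fst_conv snd_conv chart_p_upd
    unfolding fun_upd_eq_affine by (rule refl)
  moreover have "(\<dots> has_field_derivative
      (\<Sum>l\<in>I. ((if l = j then 1 else 0) + a l * e l / (P l)\<^sup>2) * E l i) - a i * e i / (P i)\<^sup>2)
      (at (x j))"
    using P by (auto intro!: derivative_eq_intros simp: field_simps power2_eq_square)
  moreover have "(\<Sum>l\<in>I. ((if l = j then 1 else 0) + a l * e l / (P l)\<^sup>2) * E l i)
      - a i * e i / (P i)\<^sup>2 = jac_matrix (\<lambda>l. a l / (P l)\<^sup>2) i j"
    using i j unfolding e_def by (rule chart_inv_derivative_eq_jac_matrix)
  ultimately show ?thesis unfolding P_def by simp
qed

lemma Jac_eq_det_jac_matrix: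
  assumes z: "z \<in> Lset n Y a"
  shows "Jac n Y a I z = detn n (jac_matrix (\<lambda>l. a l / (snd z l)\<^sup>2))"
proof -
  define x where "x = chart I z"
  have P: "chart_p x = snd z" using chart_p_chart[OF z] unfolding x_def .
  obtain y p where "z = r_map a (y, p)" "p \<in> annih n Y" "\<forall>j<n. p j \<noteq> 0"
    using z by (rule Lset_elim)
  hence nz: "\<forall>l<n. chart_p x l \<noteq> 0" and vanish: "\<forall>j\<ge>n. x j = 0"
    using P I_subset by (auto simp: r_map_def chart_def x_def annih_def cvec_def)
  have "deriv (\<lambda>t. fst (inv_into (Lset n Y a) (chart I) (x(j := t))) i) (x j) =
      jac_matrix (\<lambda>l. a l / (snd z l)\<^sup>2) i j" if ij: "i < n" "j < n" for i j
  proof -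
    have "\<forall>\<^sub>F t in nhds (x j). \<forall>l\<in>{..<n}. chart_p (x(j := t)) l \<noteq> 0"
      unfolding chart_p_upd using nz
      by (intro eventually_ball_finite ballI eventually_nhds_affine_nonzero) auto
    hence "\<forall>\<^sub>F t in nhds (x j). fst (inv_into (Lset n Y a) (chart I) (x(j := t))) i =
        fst (chart_inv a (x(j := t))) i"
      by (rule eventually_mono) (use vanish ij in \<open>auto simp: inv_into_chart\<close>)
    hence "deriv (\<lambda>t. fst (inv_into (Lset n Y a) (chart I) (x(j := t))) i) (x j) =
        deriv (\<lambda>t. fst (chart_inv a (x(j := t))) i) (x j)"
      by (rule deriv_cong_ev) (rule refl)
    thus ?thesis
      using DERIV_imp_deriv[OF chart_inv_has_field_derivative[OF nz ij]] P by simp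
  qed
  thus ?thesis unfolding Jac_def Let_def x_def[symmetric] by (intro detn_cong) simp
qed

end

section \<open>Minors of Y^perp and the squares of the d_I\<close>

context echelon
begin

text \<open>Column i in J of perp_basis is the element of Y^perp with p_J = e_i.\<close>

definition perp_basis :: "nat \<Rightarrow> nat \<Rightarrow> complex" where
  "perp_basis l i = (if l \<in> I then - E l i else if l = i then 1 else 0)"

lemma dI_eq_dI_mult_minor:
  assumes k: "card I = k" and b: "\<forall>i<k. b i \<in> Y" and T: "finite T" "card T = k"
  shows "dI k b T = dI k b I * minor I T E"
proof -
  have expand: "b i t = (\<Sum>l\<in>I. b i l * E l t)" if "i < k" for i t
    by (rule fun_cong[OF Y_expand[OF b[rule_format, OF that]]])
  have only_I: "{S. S \<subseteq> I \<and> card S = k} = {I}"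
    using card_subset_eq[OF finite_I] k by auto
  have "minor {..<k} T b = minor {..<k} T (\<lambda>i t. \<Sum>l\<in>I. b i l * E l t)"
    by (rule minor_cong) (use T in simp_all, rule expand, simp)
  also have "\<dots> = minor {..<k} I b * minor I T E"
    by (simp add: minor_Cauchy_Binet[OF finite_I] only_I)
  finally show ?thesis
    unfolding dI_eq_minor[OF T(1)] dI_eq_minor[OF finite_I] .
qed

lemma minor_perp_basis_square:
  assumes S: "S \<subseteq> {..<n}" "card S = card J"
  shows "(minor S J perp_basis)\<^sup>2 = (minor I ({..<n} - S) E)\<^sup>2"
proof -
  define T where "T = {..<n} - S"
  have fin: "finite S" "finite T" "finite J" using S(1) finite_subset unfolding T_def by auto
  have card_T: "card T = card I"
    using S I_subset fin(1) card_mono[OF _ I_subset]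
    unfolding T_def by (simp add: card_Diff_subset finite_I)
  have eqs: "S - S \<inter> J = I - T" "J - S \<inter> J = T - I" "T - T \<inter> I = T - I" "I - T \<inter> I = I - T"
    using S(1) I_subset unfolding T_def by auto
  have card_D: "card (I - T) = card (T - I)"
    using S(2) fin card_Diff_subset[of "S \<inter> J"] eqs(1,2) by (metis Int_lower1 Int_lower2 finite_Int)
  have "(minor S J perp_basis)\<^sup>2 = (minor (I - T) (T - I) perp_basis)\<^sup>2"
    using minor_delete_unit_rows_square[OF fin(1,3) S(2), of "S \<inter> J" perp_basis] eqs
    by (auto simp: perp_basis_def)
  also have "minor (I - T) (T - I) perp_basis = minor (I - T) (T - I) (\<lambda>l i. - E l i)"
    using finite_I fin card_D by (intro minor_cong) (auto simp: perp_basis_def)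
  also have "(\<dots>)\<^sup>2 = (minor (T - I) (I - T) (\<lambda>t l. E l t))\<^sup>2"
    by (simp add: minor_uminus minor_transpose[OF card_D] power_mult_distrib flip: power_mult)
  also have "\<dots> = (minor T I (\<lambda>t l. E l t))\<^sup>2"
    using minor_delete_unit_rows_square[OF fin(2) finite_I card_T, of "T \<inter> I" "\<lambda>t l. E l t"] eqs
    by (auto simp: E_unit)
  also have "\<dots> = (minor I T E)\<^sup>2" by (simp only: minor_transpose[OF card_T[symmetric]])
  finally show ?thesis unfolding T_def .
qed

lemma card_J: "card J = n - card I"
  using I_subset finite_I by (simp add: card_Diff_subset)

lemma dI_sq_mult_minor_perp_basis:
  assumes k: "card I = k" and b: "\<forall>i<k. b i \<in> Y"
    and S: "S \<subseteq> {..<n}" "card S = card J"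
  shows "(dI k b I)\<^sup>2 * (minor S J perp_basis)\<^sup>2 = (dI k b ({..<n} - S))\<^sup>2"
proof -
  have "card ({..<n} - S) = k"
    using S card_J k card_mono[OF _ I_subset] finite_subset[OF S(1)]
    by (simp add: card_Diff_subset)
  thus ?thesis
    using minor_perp_basis_square[OF S] dI_eq_dI_mult_minor[OF k b, of "{..<n} - S"]
    by (simp add: power_mult_distrib)
qed

lemma jac_matrix_eq_perp_basis:
  assumes "i \<in> J" "j \<in> J"
  shows "jac_matrix w i j = - (\<Sum>l<n. perp_basis l i * w l * perp_basis l j)"
proof -
  have "(\<Sum>l<n. perp_basis l i * w l * perp_basis l j) =
      (\<Sum>l\<in>J. perp_basis l i * w l * perp_basis l j) + (\<Sum>l\<in>I. perp_basis l i * w l * perp_basis l j)"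
    using sum.subset_diff[OF I_subset] by simp
  also have "(\<Sum>l\<in>J. perp_basis l i * w l * perp_basis l j) = (if i = j then w i else 0)"
    using assms by (simp add: perp_basis_def if_distrib[of "\<lambda>c. c * _"] cong: if_cong)
  also have "(\<Sum>l\<in>I. perp_basis l i * w l * perp_basis l j) = (\<Sum>l\<in>I. w l * E l i * E l j)"
    by (intro sum.cong) (simp_all add: perp_basis_def)
  finally show ?thesis using assms by (simp add: jac_matrix_def)
qed

lemma dI_sq_det_jac_matrix:
  assumes k: "card I = k" and b: "\<forall>i<k. b i \<in> Y"
  shows "(dI k b I)\<^sup>2 * detn n (jac_matrix w) = (-1) ^ (n - k) *
    (\<Sum>S | S \<subseteq> {..<n} \<and> card S = n - k. (dI k b ({..<n} - S))\<^sup>2 * (\<Prod>j\<in>S. w j))"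
proof -
  let ?Ss = "{S. S \<subseteq> {..<n} \<and> card S = card J}"
  have weighted: "minor J S (\<lambda>i l. perp_basis l i * w l) = (\<Prod>j\<in>S. w j) * minor S J perp_basis"
    if "S \<in> ?Ss" for S
  proof -
    have "finite S" "card J = card S" using that finite_subset by auto
    thus ?thesis
      using minor_mult_cols[of S J "\<lambda>i l. perp_basis l i" w] minor_transpose[of S J perp_basis]
      by simp
  qed
  have "detn n (jac_matrix w) = minor J J (jac_matrix w)"
    using minor_delete_unit_rows_diag[of "{..<n}" I "jac_matrix w"] I_subset
    by (simp add: minor_lessThan jac_matrix_def)
  also have "\<dots> = minor J J (\<lambda>i j. - (\<Sum>l<n. perp_basis l i * w l * perp_basis l j))"
    by (intro minor_cong) (simp_all add: jac_matrix_eq_perp_basis)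
  also have "\<dots> = (-1) ^ card J *
      (\<Sum>S\<in>?Ss. minor J S (\<lambda>i l. perp_basis l i * w l) * minor S J perp_basis)"
    unfolding minor_uminus by (subst minor_Cauchy_Binet) simp_all
  also have "\<dots> = (-1) ^ card J * (\<Sum>S\<in>?Ss. (\<Prod>j\<in>S. w j) * (minor S J perp_basis)\<^sup>2)"
    by (rule arg_cong[where f = "(*) _"], rule sum.cong) (simp_all add: weighted power2_eq_square)
  finally have "(dI k b I)\<^sup>2 * detn n (jac_matrix w) =
      (-1) ^ card J * (\<Sum>S\<in>?Ss. (\<Prod>j\<in>S. w j) * ((dI k b I)\<^sup>2 * (minor S J perp_basis)\<^sup>2))"
    by (simp add: sum_distrib_left mult_ac)
  also have "\<dots> = (-1) ^ card J * (\<Sum>S\<in>?Ss. (\<Prod>j\<in>S. w j) * (dI k b ({..<n} - S))\<^sup>2)"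
    by (rule arg_cong[where f = "(*) _"], rule sum.cong) (simp_all add: dI_sq_mult_minor_perp_basis[OF k b])
  finally show ?thesis using card_J k by (simp add: mult.commute)
qed

end

lemma Ysp_sum_closed:
  assumes "finite A" and "\<forall>l\<in>A. v l \<in> Ysp n k b"
  shows "(\<lambda>j. \<Sum>l\<in>A. c l * v l j) \<in> Ysp n k b"
proof -
  have "\<forall>l\<in>A. \<exists>d. v l = (\<lambda>j. \<Sum>i<k. d i * b i j)" using assms(2) unfolding Ysp_def by simp
  then obtain d where d: "\<And>l. l \<in> A \<Longrightarrow> v l = (\<lambda>j. \<Sum>i<k. d l i * b i j)" by metis
  have "(\<lambda>j. \<Sum>l\<in>A. c l * v l j) = (\<lambda>j. \<Sum>i<k. (\<Sum>l\<in>A. c l * d l i) * b i j)"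
    by (simp add: d sum_distrib_left sum_distrib_right sum.swap[of _ A] mult.assoc cong: sum.cong)
  thus ?thesis
    unfolding Ysp_def mem_Collect_eq by (rule exI[where x = "\<lambda>i. \<Sum>l\<in>A. c l * d l i"])
qed

lemma basis_in_Ysp:
  assumes "i < k"
  shows "b i \<in> Ysp n k b"
proof -
  have "b i = (\<lambda>j. \<Sum>i'<k. (if i' = i then 1 else 0) * b i' j)"
    using assms by (simp add: if_distrib[of "\<lambda>c. c * _"] cong: if_cong)
  thus ?thesis
    unfolding Ysp_def mem_Collect_eq by (rule exI[where x = "\<lambda>i'. if i' = i then 1 else 0"])
qed

lemma coord_sys_echelon:
  assumes I: "I \<subseteq> {..<n}" and cs: "coord_sys I (Ysp n k b)"
  obtains E where "echelon n I E" and "Ysp n k b = echelon.Y I E"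
proof -
  define restr where "restr y j = (if j \<in> I then y j else 0 :: complex)" for y j
  define E where "E l = inv_into (Ysp n k b) restr (\<lambda>j. if j = l then 1 else 0)" for l
  have bij: "bij_betw restr (Ysp n k b) {v. \<forall>j. j \<notin> I \<longrightarrow> v j = 0}"
    using cs unfolding coord_sys_def restr_def .
  have unit_img: "(\<lambda>j. if j = l then 1 else 0) \<in> restr ` Ysp n k b" if "l \<in> I" for l
    using bij_betw_imp_surj_on[OF bij] that by auto
  have E_Y: "E l \<in> Ysp n k b" if "l \<in> I" for l
    unfolding E_def by (rule inv_into_into[OF unit_img[OF that]])
  have restr_E: "restr (E l) = (\<lambda>j. if j = l then 1 else 0)" if "l \<in> I" for l
    unfolding E_def by (rule f_inv_into_f[OF unit_img[OF that]])
  have "E l t = (if t = l then 1 else 0)" if "l \<in> I" "t \<in> I" for l t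
    using fun_cong[OF restr_E[OF that(1)], of t] that(2) by (simp add: restr_def)
  with I interpret echelon n I E by unfold_locales
  have "Ysp n k b = Y"
  proof
    show "Y \<subseteq> Ysp n k b"
      unfolding Y_def using Ysp_sum_closed[OF finite_I] E_Y by auto
    show "Ysp n k b \<subseteq> Y"
    proof
      fix y assume y: "y \<in> Ysp n k b"
      have "y = (\<lambda>j. \<Sum>l\<in>I. y l * E l j)"
      proof (rule inj_onD[OF bij_betw_imp_inj_on[OF bij] _ y])
        show "restr y = restr (\<lambda>j. \<Sum>l\<in>I. y l * E l j)"
          unfolding restr_def by (auto simp: sum_E_unit)
        show "(\<lambda>j. \<Sum>l\<in>I. y l * E l j) \<in> Ysp n k b"
          using E_Y by (intro Ysp_sum_closed[OF finite_I]) auto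
      qed
      thus "y \<in> Y" by (subst \<open>y = _\<close>) (rule lincomb_in_Y)
    qed
  qed
  thus ?thesis by (rule that[OF echelon_axioms])
qed

theorem theorem4p4:
  fixes n k :: nat and b :: "nat \<Rightarrow> nat \<Rightarrow> complex" and a :: "nat \<Rightarrow> complex"
  assumes b_vec: "\<forall>i<k. b i \<in> cvec n"
    and b_indep: "lin_indep k b"
    and a_nz: "\<forall>j<n. a j \<noteq> 0"
    and Y_nondeg: "\<forall>j<n. \<exists>y\<in>Ysp n k b. y j \<noteq> 0"
    and Yperp_nondeg: "\<forall>j<n. \<exists>p\<in>annih n (Ysp n k b). p j \<noteq> 0"
  shows "\<forall>I. I \<subseteq> {..<n} \<and> card I = k \<and> coord_sys I (Ysp n k b) \<longrightarrow>
           (\<forall>z \<in> Lset n (Ysp n k b) a.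
              (dI k b I)\<^sup>2 * Jac n (Ysp n k b) a I z =
              (-1) ^ (n - k) *
              (\<Sum>M | M \<subseteq> {..<n} \<and> card M = n - k.
                 (dI k b ({..<n} - M))\<^sup>2 * (\<Prod>j\<in>M. a j / (snd z j)\<^sup>2)))"
proof (intro allI impI ballI)
  fix I z
  assume "I \<subseteq> {..<n} \<and> card I = k \<and> coord_sys I (Ysp n k b)"
  hence I: "I \<subseteq> {..<n}" and k: "card I = k" and cs: "coord_sys I (Ysp n k b)" by auto
  obtain E where "echelon n I E" and Y: "Ysp n k b = echelon.Y I E"
    using coord_sys_echelon[OF I cs] .
  then interpret echelon n I E by simp
  assume "z \<in> Lset n (Ysp n k b) a"
  hence "Jac n Y a I z = detn n (jac_matrix (\<lambda>j. a j / (snd z j)\<^sup>2))"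
    unfolding Y by (rule Jac_eq_det_jac_matrix)
  moreover have "\<forall>i<k. b i \<in> Y" using basis_in_Ysp Y by blast
  ultimately show "(dI k b I)\<^sup>2 * Jac n (Ysp n k b) a I z = (-1) ^ (n - k) *
      (\<Sum>M | M \<subseteq> {..<n} \<and> card M = n - k. (dI k b ({..<n} - M))\<^sup>2 * (\<Prod>j\<in>M. a j / (snd z j)\<^sup>2))"
    using dI_sq_det_jac_matrix[OF k] unfolding Y by simp
qed

end
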